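(* Let $\mathcal T\subseteq\mathcal C$ be a self-orthogonal subcategory closed under direct summands, let $n\ge0$, and let $X\in\mathcal X_{\mathcal T}$. The following are equivalent: (1) $X\in\check{\mathcal T}_n$; (2) $\mathbb E^{n+1}(Y,X)=0$ for all $Y\in{}^{\perp}\mathcal T$; (3) $\mathbb E^{n+1}(Y,X)=0$ for all $Y\in\mathcal X_{\mathcal T}$.
   Context: $(\mathcal C,\mathbb E,\mathfrak s)$ is an extriangulated category in the sense of Nakaoka–Palu, Krull–Schmidt, with enough projectives and enough injectives; subcategories are full, additive, closed under isomorphisms. Higher extensions: $\mathbb E^1=\mathbb E$, $\mathbb E^{i+1}(X,Y)=\mathbb E(\Omega^iX,Y)\cong\mathbb E(X,\Sigma^iY)$ (syzygies/cosyzygies via projective/injective $\mathbb E$-triangles). $\mathcal T$ is self-orthogonal if $\mathbb E^i(T_1,T_2)=0$ for all $i\ge1$, $T_1,T_2\in\mathcal T$. ${}^{\perp}\mathcal T=\{Y:\mathbb E^i(Y,T)=0\ \forall i\ge1,\forall T\in\mathcal T\}$. $\check{\mathcal T}_n$ is the subcategory of objects $A$ for which there exist $\mathbb E$-triangles $K_i\to T_i\to K_{i+1}\dashrightarrow$ ($0\le i\le n-1$) with $K_0=A$, all $T_i\in\mathcal T$ and $K_n\in\mathcal T$. $\mathcal X_{\mathcal T}$ is the subcategory of objects $A$ for which there exist $\mathbb E$-triangles $K_i\to T_i\to K_{i+1}\dashrightarrow$ for all $i\ge0$ with $K_0=A$, $T_i\in\mathcal T$ and $K_{i+1}\in{}^{\perp}\mathcal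 T$ for all $i$. *)

theory Defs
  imports Main
begin

text \<open>An extriangulated category (Nakaoka--Palu) encoded as a record.
  Hom C A B is the hom-set from A to B; cmp C g f is the composite g after f.
  Ex C D A is the extension group E(D,A) (contravariant in D, covariant in A);
  push C a d is a_* d, pull C c d is c^* d;
  rea C d x y means that the sequence A -x-> B -y-> D belongs to the
  equivalence class s(d).\<close>

record ('o,'m,'e) extri_cat =
  Ob :: "'o set"
  Hom :: "'o \<Rightarrow> 'o \<Rightarrow> 'm set"
  cmp :: "'m \<Rightarrow> 'm \<Rightarrow> 'm"
  idm :: "'o \<Rightarrow> 'm"
  madd :: "'m \<Rightarrow> 'm \<Rightarrow> 'm"
  mneg :: "'m \<Rightarrow> 'm"
  mzero :: "'o \<Rightarrow> 'o \<Rightarrow> 'm"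
  Ex :: "'o \<Rightarrow> 'o \<Rightarrow> 'e set"
  eadd :: "'e \<Rightarrow> 'e \<Rightarrow> 'e"
  eneg :: "'e \<Rightarrow> 'e"
  ezero :: "'o \<Rightarrow> 'o \<Rightarrow> 'e"
  push :: "'m \<Rightarrow> 'e \<Rightarrow> 'e"
  pull :: "'m \<Rightarrow> 'e \<Rightarrow> 'e"
  rea :: "'e \<Rightarrow> 'm \<Rightarrow> 'm \<Rightarrow> bool"

definition ab_group_on :: "'a set \<Rightarrow> ('a \<Rightarrow> 'a \<Rightarrow> 'a) \<Rightarrow> ('a \<Rightarrow> 'a) \<Rightarrow> 'a \<Rightarrow> bool" where
  "ab_group_on S add neg z \<longleftrightarrow> z \<in> S \<and> (\<forall>a\<in>S. \<forall>b\<in>S. add a b \<in> S) \<and> (\<forall>a\<in>S. neg a \<in> S)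
     \<and> (\<forall>a\<in>S. \<forall>b\<in>S. \<forall>c\<in>S. add (add a b) c = add a (add b c))
     \<and> (\<forall>a\<in>S. \<forall>b\<in>S. add a b = add b a) \<and> (\<forall>a\<in>S. add z a = a) \<and> (\<forall>a\<in>S. add (neg a) a = z)"

definition is_category :: "('o,'m,'e) extri_cat \<Rightarrow> bool" where
  "is_category C \<longleftrightarrow>
     (\<forall>A B. (A \<notin> Ob C \<or> B \<notin> Ob C) \<longrightarrow> Hom C A B = {})
   \<and> (\<forall>A B A' B'. (A, B) \<noteq> (A', B') \<longrightarrow> Hom C A B \<inter> Hom C A' B' = {})
   \<and> (\<forall>A\<in>Ob C. idm C A \<in> Hom C A A)
   \<and> (\<forall>A B D f g. f \<in> Hom C A B \<longrightarrow> g \<in> Hom C B D \<longrightarrow> cmp C g f \<in> Hom C A D)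
   \<and> (\<forall>A B D F f g h. f \<in> Hom C A B \<longrightarrow> g \<in> Hom C B D \<longrightarrow> h \<in> Hom C D F \<longrightarrow>
        cmp C h (cmp C g f) = cmp C (cmp C h g) f)
   \<and> (\<forall>A B f. f \<in> Hom C A B \<longrightarrow> cmp C f (idm C A) = f \<and> cmp C (idm C B) f = f)"

definition is_iso :: "('o,'m,'e) extri_cat \<Rightarrow> 'o \<Rightarrow> 'o \<Rightarrow> 'm \<Rightarrow> bool" where
  "is_iso C A B f \<longleftrightarrow> f \<in> Hom C A B \<and>
     (\<exists>g\<in>Hom C B A. cmp C g f = idm C A \<and> cmp C f g = idm C B)"

definition is_biproduct :: "('o,'m,'e) extri_cat \<Rightarrow> 'o \<Rightarrow> 'o \<Rightarrow> 'o \<Rightarrow> 'm \<Rightarrow> 'm \<Rightarrow> 'm \<Rightarrow> 'm \<Rightarrow> bool" where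
  "is_biproduct C A B P p1 p2 i1 i2 \<longleftrightarrow> P \<in> Ob C \<and>
     p1 \<in> Hom C P A \<and> p2 \<in> Hom C P B \<and> i1 \<in> Hom C A P \<and> i2 \<in> Hom C B P
   \<and> cmp C p1 i1 = idm C A \<and> cmp C p2 i2 = idm C B
   \<and> cmp C p1 i2 = mzero C B A \<and> cmp C p2 i1 = mzero C A B
   \<and> madd C (cmp C i1 p1) (cmp C i2 p2) = idm C P"

definition is_zero_obj :: "('o,'m,'e) extri_cat \<Rightarrow> 'o \<Rightarrow> bool" where
  "is_zero_obj C Z \<longleftrightarrow> Z \<in> Ob C \<and> idm C Z = mzero C Z Z"

definition is_additive :: "('o,'m,'e) extri_cat \<Rightarrow> bool" where
  "is_additive C \<longleftrightarrow>
     (\<forall>A\<in>Ob C. \<forall>B\<in>Ob C. ab_group_on (Hom C A B) (madd C) (mneg C) (mzero C A B))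
   \<and> (\<forall>A B D f f' g. f \<in> Hom C A B \<longrightarrow> f' \<in> Hom C A B \<longrightarrow> g \<in> Hom C B D \<longrightarrow>
        cmp C g (madd C f f') = madd C (cmp C g f) (cmp C g f'))
   \<and> (\<forall>A B D f g g'. f \<in> Hom C A B \<longrightarrow> g \<in> Hom C B D \<longrightarrow> g' \<in> Hom C B D \<longrightarrow>
        cmp C (madd C g g') f = madd C (cmp C g f) (cmp C g' f))
   \<and> (\<exists>Z. is_zero_obj C Z)
   \<and> (\<forall>A\<in>Ob C. \<forall>B\<in>Ob C. \<exists>P p1 p2 i1 i2. is_biproduct C A B P p1 p2 i1 i2)"

definition ET1 :: "('o,'m,'e) extri_cat \<Rightarrow> bool" where
  "ET1 C \<longleftrightarrow>
     (\<forall>D A. (D \<notin> Ob C \<or> A \<notin> Ob C) \<longrightarrow> Ex C D A = {})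
   \<and> (\<forall>D A D' A'. (D, A) \<noteq> (D', A') \<longrightarrow> Ex C D A \<inter> Ex C D' A' = {})
   \<and> (\<forall>D\<in>Ob C. \<forall>A\<in>Ob C. ab_group_on (Ex C D A) (eadd C) (eneg C) (ezero C D A))
   \<and> (\<forall>A A' D a d. a \<in> Hom C A A' \<longrightarrow> d \<in> Ex C D A \<longrightarrow> push C a d \<in> Ex C D A')
   \<and> (\<forall>A D D' c d. c \<in> Hom C D' D \<longrightarrow> d \<in> Ex C D A \<longrightarrow> pull C c d \<in> Ex C D' A)
   \<and> (\<forall>A D d. d \<in> Ex C D A \<longrightarrow> push C (idm C A) d = d \<and> pull C (idm C D) d = d)
   \<and> (\<forall>A A' A'' D a a' d. a \<in> Hom C A A' \<longrightarrow> a' \<in> Hom C A' A'' \<longrightarrow> d \<in> Ex C D A \<longrightarrow>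
        push C (cmp C a' a) d = push C a' (push C a d))
   \<and> (\<forall>A D D' D'' c c' d. c \<in> Hom C D' D \<longrightarrow> c' \<in> Hom C D'' D' \<longrightarrow> d \<in> Ex C D A \<longrightarrow>
        pull C (cmp C c c') d = pull C c' (pull C c d))
   \<and> (\<forall>A A' D D' a c d. a \<in> Hom C A A' \<longrightarrow> c \<in> Hom C D' D \<longrightarrow> d \<in> Ex C D A \<longrightarrow>
        push C a (pull C c d) = pull C c (push C a d))
   \<and> (\<forall>A A' D a d d'. a \<in> Hom C A A' \<longrightarrow> d \<in> Ex C D A \<longrightarrow> d' \<in> Ex C D A \<longrightarrow>
        push C a (eadd C d d') = eadd C (push C a d) (push C a d'))
   \<and> (\<forall>A D D' c d d'. c \<in> Hom C D' D \<longrightarrow> d \<in> Ex C D A \<longrightarrow> d' \<in> Ex C D A \<longrightarrow>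
        pull C c (eadd C d d') = eadd C (pull C c d) (pull C c d'))
   \<and> (\<forall>A A' D a a' d. a \<in> Hom C A A' \<longrightarrow> a' \<in> Hom C A A' \<longrightarrow> d \<in> Ex C D A \<longrightarrow>
        push C (madd C a a') d = eadd C (push C a d) (push C a' d))
   \<and> (\<forall>A D D' c c' d. c \<in> Hom C D' D \<longrightarrow> c' \<in> Hom C D' D \<longrightarrow> d \<in> Ex C D A \<longrightarrow>
        pull C (madd C c c') d = eadd C (pull C c d) (pull C c' d))"

definition equiv_seq :: "('o,'m,'e) extri_cat \<Rightarrow> 'o \<Rightarrow> 'o \<Rightarrow> 'm \<Rightarrow> 'm \<Rightarrow> 'm \<Rightarrow> 'm \<Rightarrow> bool" where
  "equiv_seq C B B' x y x' y' \<longleftrightarrow> (\<exists>b. is_iso C B B' b \<and> cmp C b x = x' \<and> cmp C y' b = y)"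

definition ET2 :: "('o,'m,'e) extri_cat \<Rightarrow> bool" where
  "ET2 C \<longleftrightarrow>
     (\<forall>d x y. rea C d x y \<longrightarrow> (\<exists>A B D. d \<in> Ex C D A \<and> x \<in> Hom C A B \<and> y \<in> Hom C B D))
   \<and> (\<forall>A D d. d \<in> Ex C D A \<longrightarrow> (\<exists>B x y. x \<in> Hom C A B \<and> y \<in> Hom C B D \<and> rea C d x y))
   \<and> (\<forall>A B B' D d x y x' y'. d \<in> Ex C D A \<longrightarrow> x \<in> Hom C A B \<longrightarrow> y \<in> Hom C B D \<longrightarrow> rea C d x y \<longrightarrow>
        x' \<in> Hom C A B' \<longrightarrow> y' \<in> Hom C B' D \<longrightarrow> (rea C d x' y' \<longleftrightarrow> equiv_seq C B B' x y x' y'))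
   \<and> (\<forall>A B D A' B' D' d d' x y x' y' a c.
        d \<in> Ex C D A \<longrightarrow> d' \<in> Ex C D' A' \<longrightarrow> x \<in> Hom C A B \<longrightarrow> y \<in> Hom C B D \<longrightarrow>
        x' \<in> Hom C A' B' \<longrightarrow> y' \<in> Hom C B' D' \<longrightarrow> rea C d x y \<longrightarrow> rea C d' x' y' \<longrightarrow>
        a \<in> Hom C A A' \<longrightarrow> c \<in> Hom C D D' \<longrightarrow> push C a d = pull C c d' \<longrightarrow>
        (\<exists>b\<in>Hom C B B'. cmp C b x = cmp C x' a \<and> cmp C c y = cmp C y' b))
   \<and> (\<forall>A D P p1 p2 i1 i2. is_biproduct C A D P p1 p2 i1 i2 \<longrightarrow> rea C (ezero C D A) i1 p2)
   \<and> (\<forall>A B D A' B' D' d d' x y x' y' PA pA1 pA2 iA1 iA2 PB pB1 pB2 iB1 iB2 PD pD1 pD2 iD1 iD2 e.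
        d \<in> Ex C D A \<longrightarrow> d' \<in> Ex C D' A' \<longrightarrow> x \<in> Hom C A B \<longrightarrow> y \<in> Hom C B D \<longrightarrow>
        x' \<in> Hom C A' B' \<longrightarrow> y' \<in> Hom C B' D' \<longrightarrow> rea C d x y \<longrightarrow> rea C d' x' y' \<longrightarrow>
        is_biproduct C A A' PA pA1 pA2 iA1 iA2 \<longrightarrow> is_biproduct C B B' PB pB1 pB2 iB1 iB2 \<longrightarrow>
        is_biproduct C D D' PD pD1 pD2 iD1 iD2 \<longrightarrow> e \<in> Ex C PD PA \<longrightarrow>
        push C pA1 (pull C iD1 e) = d \<longrightarrow> push C pA1 (pull C iD2 e) = ezero C D' A \<longrightarrow>
        push C pA2 (pull C iD1 e) = ezero C D A' \<longrightarrow> push C pA2 (pull C iD2 e) = d' \<longrightarrow>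
        rea C e (madd C (cmp C iB1 (cmp C x pA1)) (cmp C iB2 (cmp C x' pA2)))
                (madd C (cmp C iD1 (cmp C y pB1)) (cmp C iD2 (cmp C y' pB2))))"

definition ET3 :: "('o,'m,'e) extri_cat \<Rightarrow> bool" where
  "ET3 C \<longleftrightarrow>
     (\<forall>A B D A' B' D' d d' x y x' y' a b.
        d \<in> Ex C D A \<longrightarrow> d' \<in> Ex C D' A' \<longrightarrow> x \<in> Hom C A B \<longrightarrow> y \<in> Hom C B D \<longrightarrow>
        x' \<in> Hom C A' B' \<longrightarrow> y' \<in> Hom C B' D' \<longrightarrow> rea C d x y \<longrightarrow> rea C d' x' y' \<longrightarrow>
        a \<in> Hom C A A' \<longrightarrow> b \<in> Hom C B B' \<longrightarrow> cmp C b x = cmp C x' a \<longrightarrow>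
        (\<exists>c\<in>Hom C D D'. cmp C c y = cmp C y' b \<and> push C a d = pull C c d'))"

definition ET3op :: "('o,'m,'e) extri_cat \<Rightarrow> bool" where
  "ET3op C \<longleftrightarrow>
     (\<forall>A B D A' B' D' d d' x y x' y' b c.
        d \<in> Ex C D A \<longrightarrow> d' \<in> Ex C D' A' \<longrightarrow> x \<in> Hom C A B \<longrightarrow> y \<in> Hom C B D \<longrightarrow>
        x' \<in> Hom C A' B' \<longrightarrow> y' \<in> Hom C B' D' \<longrightarrow> rea C d x y \<longrightarrow> rea C d' x' y' \<longrightarrow>
        b \<in> Hom C B B' \<longrightarrow> c \<in> Hom C D D' \<longrightarrow> cmp C c y = cmp C y' b \<longrightarrow>
        (\<exists>a\<in>Hom C A A'. cmp C b x = cmp C x' a \<and> push C a d = pull C c d'))"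

definition ET4 :: "('o,'m,'e) extri_cat \<Rightarrow> bool" where
  "ET4 C \<longleftrightarrow>
     (\<forall>A B D F G d d' f f' g g'.
        d \<in> Ex C D A \<longrightarrow> f \<in> Hom C A B \<longrightarrow> f' \<in> Hom C B D \<longrightarrow> rea C d f f' \<longrightarrow>
        d' \<in> Ex C F B \<longrightarrow> g \<in> Hom C B G \<longrightarrow> g' \<in> Hom C G F \<longrightarrow> rea C d' g g' \<longrightarrow>
        (\<exists>E h' dd e d''. h' \<in> Hom C G E \<and> dd \<in> Hom C D E \<and> e \<in> Hom C E F \<and> d'' \<in> Ex C E A
           \<and> rea C d'' (cmp C g f) h'
           \<and> cmp C dd f' = cmp C h' g \<and> cmp C e h' = g'
           \<and> rea C (push C f' d') dd e
           \<and> pull C dd d'' = d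
           \<and> push C f d'' = pull C e d'))"

definition ET4op :: "('o,'m,'e) extri_cat \<Rightarrow> bool" where
  "ET4op C \<longleftrightarrow>
     (\<forall>A B D F G d d' f f' g g'.
        d \<in> Ex C D A \<longrightarrow> f \<in> Hom C A B \<longrightarrow> f' \<in> Hom C B D \<longrightarrow> rea C d f f' \<longrightarrow>
        d' \<in> Ex C B F \<longrightarrow> g \<in> Hom C F G \<longrightarrow> g' \<in> Hom C G B \<longrightarrow> rea C d' g g' \<longrightarrow>
        (\<exists>E h dd e d''. h \<in> Hom C E G \<and> dd \<in> Hom C F E \<and> e \<in> Hom C E A \<and> d'' \<in> Ex C D E
           \<and> rea C d'' h (cmp C f' g')
           \<and> cmp C h dd = g \<and> cmp C f e = cmp C g' h
           \<and> rea C (pull C f d') dd e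
           \<and> push C e d'' = d
           \<and> push C dd d' = pull C f' d''))"

definition extriangulated :: "('o,'m,'e) extri_cat \<Rightarrow> bool" where
  "extriangulated C \<longleftrightarrow> is_category C \<and> is_additive C \<and> ET1 C \<and> ET2 C \<and> ET3 C \<and> ET3op C
     \<and> ET4 C \<and> ET4op C"

text \<open>Krull--Schmidt: every object is a finite direct sum of objects with local
  endomorphism rings (a ring is local iff it is nonzero and for every r, r or 1-r is a unit).\<close>
definition local_obj :: "('o,'m,'e) extri_cat \<Rightarrow> 'o \<Rightarrow> bool" where
  "local_obj C A \<longleftrightarrow> A \<in> Ob C \<and> idm C A \<noteq> mzero C A A \<and>
     (\<forall>f\<in>Hom C A A. is_iso C A A f \<or> is_iso C A A (madd C (idm C A) (mneg C f)))"

definition krull_schmidt :: "('o,'m,'e) extri_cat \<Rightarrow> bool" where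
  "krull_schmidt C \<longleftrightarrow> (\<forall>X\<in>Ob C. \<exists>(n::nat) As \<iota> \<pi>.
     (\<forall>k<n. local_obj C (As k) \<and> \<iota> k \<in> Hom C (As k) X \<and> \<pi> k \<in> Hom C X (As k))
   \<and> (\<forall>k<n. \<forall>l<n. cmp C (\<pi> k) (\<iota> l) = (if k = l then idm C (As k) else mzero C (As l) (As k)))
   \<and> foldr (\<lambda>k acc. madd C (cmp C (\<iota> k) (\<pi> k)) acc) [0..<n] (mzero C X X) = idm C X)"

definition etri :: "('o,'m,'e) extri_cat \<Rightarrow> 'o \<Rightarrow> 'o \<Rightarrow> 'o \<Rightarrow> bool" where
  "etri C A B D \<longleftrightarrow> (\<exists>x y d. d \<in> Ex C D A \<and> x \<in> Hom C A B \<and> y \<in> Hom C B D \<and> rea C d x y)"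

definition projective :: "('o,'m,'e) extri_cat \<Rightarrow> 'o \<Rightarrow> bool" where
  "projective C P \<longleftrightarrow> P \<in> Ob C \<and> (\<forall>A B D x y d c. d \<in> Ex C D A \<longrightarrow> x \<in> Hom C A B \<longrightarrow>
     y \<in> Hom C B D \<longrightarrow> rea C d x y \<longrightarrow> c \<in> Hom C P D \<longrightarrow> (\<exists>b\<in>Hom C P B. cmp C y b = c))"

definition injective :: "('o,'m,'e) extri_cat \<Rightarrow> 'o \<Rightarrow> bool" where
  "injective C I \<longleftrightarrow> I \<in> Ob C \<and> (\<forall>A B D x y d a. d \<in> Ex C D A \<longrightarrow> x \<in> Hom C A B \<longrightarrow>
     y \<in> Hom C B D \<longrightarrow> rea C d x y \<longrightarrow> a \<in> Hom C A I \<longrightarrow> (\<exists>b\<in>Hom C B I. cmp C b x = a))"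

definition enough_projectives :: "('o,'m,'e) extri_cat \<Rightarrow> bool" where
  "enough_projectives C \<longleftrightarrow> (\<forall>D\<in>Ob C. \<exists>A P. projective C P \<and> etri C A P D)"

definition enough_injectives :: "('o,'m,'e) extri_cat \<Rightarrow> bool" where
  "enough_injectives C \<longleftrightarrow> (\<forall>A\<in>Ob C. \<exists>I D. injective C I \<and> etri C A I D)"

inductive syz :: "('o,'m,'e) extri_cat \<Rightarrow> nat \<Rightarrow> 'o \<Rightarrow> 'o \<Rightarrow> bool" for C where
  syz0: "X \<in> Ob C \<Longrightarrow> syz C 0 X X"
| syzS: "syz C i X Z \<Longrightarrow> projective C P \<Longrightarrow> etri C W P Z \<Longrightarrow> syz C (Suc i) X W"

text \<open>ext_vanishes C k Y X (for k \<ge> 1) means E^k(Y,X) = E(Omega^(k-1) Y, X) = 0,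
  for every choice of the syzygy Omega^(k-1) Y.\<close>
definition ext_vanishes :: "('o,'m,'e) extri_cat \<Rightarrow> nat \<Rightarrow> 'o \<Rightarrow> 'o \<Rightarrow> bool" where
  "ext_vanishes C k Y X \<longleftrightarrow> (\<forall>Z. syz C (k - 1) Y Z \<longrightarrow> Ex C Z X = {ezero C Z X})"

text \<open>Subcategories: full, additive, closed under isomorphisms (given by their objects).\<close>
definition subcategory :: "('o,'m,'e) extri_cat \<Rightarrow> 'o set \<Rightarrow> bool" where
  "subcategory C T \<longleftrightarrow> T \<subseteq> Ob C \<and> (\<exists>Z\<in>T. is_zero_obj C Z)
   \<and> (\<forall>A B P p1 p2 i1 i2. A \<in> T \<longrightarrow> B \<in> T \<longrightarrow> is_biproduct C A B P p1 p2 i1 i2 \<longrightarrow> P \<in> T)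
   \<and> (\<forall>A B f. A \<in> T \<longrightarrow> is_iso C A B f \<longrightarrow> B \<in> T)"

definition closed_under_summands :: "('o,'m,'e) extri_cat \<Rightarrow> 'o set \<Rightarrow> bool" where
  "closed_under_summands C T \<longleftrightarrow>
     (\<forall>A B P p1 p2 i1 i2. P \<in> T \<longrightarrow> is_biproduct C A B P p1 p2 i1 i2 \<longrightarrow> A \<in> T)"

definition self_orthogonal :: "('o,'m,'e) extri_cat \<Rightarrow> 'o set \<Rightarrow> bool" where
  "self_orthogonal C T \<longleftrightarrow> (\<forall>T1\<in>T. \<forall>T2\<in>T. \<forall>i\<ge>1. ext_vanishes C i T1 T2)"

definition lperp :: "('o,'m,'e) extri_cat \<Rightarrow> 'o set \<Rightarrow> 'o set" where
  "lperp C T = {Y \<in> Ob C. \<forall>i\<ge>1. \<forall>T'\<in>T. ext_vanishes C i Y T'}"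

definition Tcheck :: "('o,'m,'e) extri_cat \<Rightarrow> 'o set \<Rightarrow> nat \<Rightarrow> 'o set" where
  "Tcheck C T n = {A \<in> Ob C. \<exists>K Ti. K 0 = A \<and> (\<forall>i<n. etri C (K i) (Ti i) (K (Suc i)) \<and> Ti i \<in> T)
      \<and> K n \<in> T}"

definition XT :: "('o,'m,'e) extri_cat \<Rightarrow> 'o set \<Rightarrow> 'o set" where
  "XT C T = {A \<in> Ob C. \<exists>K Ti. K 0 = A \<and>
      (\<forall>i. etri C (K i) (Ti i) (K (Suc i)) \<and> Ti i \<in> T \<and> K (Suc i) \<in> lperp C T)}"

end

theory Submission
  imports Defs
begin

text \<open>Everything is dimension shifting along \<E>-triangles \<open>X \<rightarrow> T\<^sub>0 \<rightarrow> X\<^sub>1\<close> with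
  \<open>T\<^sub>0 \<in> \<T>\<close>, tested against \<open>Y \<in> \<^sup>\<bottom>\<T>\<close>. The two long exact sequences give
  \<open>\<E>\<^bsup>k+1\<^esup>(Y,X\<^sub>1) = 0 \<Longrightarrow> \<E>\<^bsup>k+2\<^esup>(Y,X) = 0\<close> and \<open>\<E>\<^bsup>k+2\<^esup>(Y,X) = 0 \<Longrightarrow> \<E>\<^bsup>k+1\<^esup>(Y,X\<^sub>1) = 0\<close>.
  The first, by induction along a \<open>\<T>\<close>-resolution of length \<open>n\<close>, gives (1) \<open>\<Longrightarrow>\<close> (2).
  The second, applied \<open>n\<close> times along the resolution witnessing \<open>X \<in> \<X>\<^sub>\<T>\<close>, reduces (3)
  to \<open>\<E>(X\<^sub>1,X) = 0\<close> for its first triangle \<open>X \<rightarrow> T\<^sub>0 \<rightarrow> X\<^sub>1\<close>; that triangle then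
  splits, so \<open>X\<close> is a summand of \<open>T\<^sub>0\<close>. Finally (2) \<open>\<Longrightarrow>\<close> (3) because
  \<open>\<X>\<^sub>\<T> \<subseteq> \<^sup>\<bottom>\<T>\<close>: \<open>\<^sup>\<bottom>\<T>\<close> is closed under cocones \<open>Y \<rightarrow> S \<rightarrow> L\<close>, as shifting in
  the second variable along an injective coresolution of \<open>T \<in> \<T>\<close> shows.\<close>

lemma ab_group_on_idem_zero:
  assumes "ab_group_on S add neg z" and "x \<in> S" and "add x x = x"
  shows "x = z"
proof -
  have "add (neg x) (add x x) = add (add (neg x) x) x"
    using assms(1,2) unfolding ab_group_on_def by auto
  then show ?thesis
    using assms unfolding ab_group_on_def by auto
qed

inductive cosyz :: "('o,'m,'e) extri_cat \<Rightarrow> 'o \<Rightarrow> 'o \<Rightarrow> bool" for C A where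
  cosyz_refl: "cosyz C A A"
| cosyz_step: "cosyz C A U \<Longrightarrow> injective C I \<Longrightarrow> etri C U I U' \<Longrightarrow> cosyz C A U'"

definition ext_zero :: "('o,'m,'e) extri_cat \<Rightarrow> 'o \<Rightarrow> 'o \<Rightarrow> bool" where
  "ext_zero C Z X \<longleftrightarrow> (\<forall>e\<in>Ex C Z X. e = ezero C Z X)"

lemma ext_vanishes_SucD:
  "ext_vanishes C (Suc j) Y X \<Longrightarrow> syz C j Y Z \<Longrightarrow> ext_zero C Z X"
  unfolding ext_vanishes_def ext_zero_def by auto

lemma lperp_iff:
  "Y \<in> lperp C T \<longleftrightarrow> Y \<in> Ob C \<and> (\<forall>j. \<forall>B\<in>T. ext_vanishes C (Suc j) Y B)"
  unfolding lperp_def by (auto dest: Suc_le_D)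

lemma lperp_ext_vanishes: "Y \<in> lperp C T \<Longrightarrow> B \<in> T \<Longrightarrow> ext_vanishes C (Suc j) Y B"
  unfolding lperp_iff by blast

lemma Tcheck_0: "Tcheck C T 0 = T \<inter> Ob C"
  unfolding Tcheck_def by auto

locale extri_category =
  fixes C :: "('o,'m,'e) extri_cat"
  assumes extriangulated: "extriangulated C"
begin

lemma category: "is_category C" and additive: "is_additive C"
  and ET1: "ET1 C" and ET2: "ET2 C" and ET3: "ET3 C" and ET3op: "ET3op C" and ET4: "ET4 C"
  using extriangulated unfolding extriangulated_def by auto

lemma Hom_Ob: "f \<in> Hom C A B \<Longrightarrow> A \<in> Ob C \<and> B \<in> Ob C"
  using category unfolding is_category_def by (metis empty_iff)

lemma idm_Hom: "A \<in> Ob C \<Longrightarrow> idm C A \<in> Hom C A A"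
  using category unfolding is_category_def by blast

lemma cmp_Hom: "f \<in> Hom C A B \<Longrightarrow> g \<in> Hom C B D \<Longrightarrow> cmp C g f \<in> Hom C A D"
  using category unfolding is_category_def by blast

lemma cmp_assoc: "f \<in> Hom C A B \<Longrightarrow> g \<in> Hom C B D \<Longrightarrow> h \<in> Hom C D F \<Longrightarrow>
    cmp C h (cmp C g f) = cmp C (cmp C h g) f"
  using category unfolding is_category_def by blast

lemma cmp_idm_left: "f \<in> Hom C A B \<Longrightarrow> cmp C (idm C B) f = f"
  and cmp_idm_right: "f \<in> Hom C A B \<Longrightarrow> cmp C f (idm C A) = f"
  using category unfolding is_category_def by blast+

lemma biproduct_exists:
  "A \<in> Ob C \<Longrightarrow> B \<in> Ob C \<Longrightarrow> \<exists>P p1 p2 i1 i2. is_biproduct C A B P p1 p2 i1 i2"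
  using additive unfolding is_additive_def by blast

lemma biproduct_Hom:
  assumes "is_biproduct C A B P p1 p2 i1 i2"
  shows "p1 \<in> Hom C P A" "p2 \<in> Hom C P B" "i1 \<in> Hom C A P" "i2 \<in> Hom C B P"
    "cmp C p1 i1 = idm C A" "cmp C p2 i2 = idm C B"
  using assms unfolding is_biproduct_def by auto

lemma Ex_Ob: "d \<in> Ex C D A \<Longrightarrow> D \<in> Ob C \<and> A \<in> Ob C"
  using ET1 unfolding ET1_def by (metis empty_iff)

lemma Ex_group: "D \<in> Ob C \<Longrightarrow> A \<in> Ob C \<Longrightarrow> ab_group_on (Ex C D A) (eadd C) (eneg C) (ezero C D A)"
  using ET1 unfolding ET1_def by simp

lemma ezero_Ex: "D \<in> Ob C \<Longrightarrow> A \<in> Ob C \<Longrightarrow> ezero C D A \<in> Ex C D A"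
  using Ex_group unfolding ab_group_on_def by blast

lemma ezero_eadd: "D \<in> Ob C \<Longrightarrow> A \<in> Ob C \<Longrightarrow> eadd C (ezero C D A) (ezero C D A) = ezero C D A"
  using Ex_group ezero_Ex unfolding ab_group_on_def by blast

lemma push_Ex: "a \<in> Hom C A A' \<Longrightarrow> d \<in> Ex C D A \<Longrightarrow> push C a d \<in> Ex C D A'"
  using ET1 unfolding ET1_def by simp

lemma pull_Ex: "c \<in> Hom C D' D \<Longrightarrow> d \<in> Ex C D A \<Longrightarrow> pull C c d \<in> Ex C D' A"
  using ET1 unfolding ET1_def by simp

lemma push_idm: "d \<in> Ex C D A \<Longrightarrow> push C (idm C A) d = d"
  using ET1 unfolding ET1_def by simp

lemma pull_idm: "d \<in> Ex C D A \<Longrightarrow> pull C (idm C D) d = d"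
  using ET1 unfolding ET1_def by simp

lemma push_cmp: "a \<in> Hom C A A' \<Longrightarrow> a' \<in> Hom C A' A'' \<Longrightarrow> d \<in> Ex C D A \<Longrightarrow>
    push C (cmp C a' a) d = push C a' (push C a d)"
  using ET1 unfolding ET1_def by simp

lemma pull_cmp: "c \<in> Hom C D' D \<Longrightarrow> c' \<in> Hom C D'' D' \<Longrightarrow> d \<in> Ex C D A \<Longrightarrow>
    pull C (cmp C c c') d = pull C c' (pull C c d)"
  using ET1 unfolding ET1_def by simp

lemma push_eadd: "a \<in> Hom C A A' \<Longrightarrow> d \<in> Ex C D A \<Longrightarrow> d' \<in> Ex C D A \<Longrightarrow>
    push C a (eadd C d d') = eadd C (push C a d) (push C a d')"
  using ET1 unfolding ET1_def by simp

lemma pull_eadd: "c \<in> Hom C D' D \<Longrightarrow> d \<in> Ex C D A \<Longrightarrow> d' \<in> Ex C D A \<Longrightarrow>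
    pull C c (eadd C d d') = eadd C (pull C c d) (pull C c d')"
  using ET1 unfolding ET1_def by simp

lemma push_ezero:
  assumes a: "a \<in> Hom C A A'" and "D \<in> Ob C"
  shows "push C a (ezero C D A) = ezero C D A'"
proof -
  have ob: "A \<in> Ob C" "A' \<in> Ob C" using Hom_Ob a by auto
  have z: "ezero C D A \<in> Ex C D A" using ezero_Ex ob assms by auto
  have "push C a (ezero C D A) = eadd C (push C a (ezero C D A)) (push C a (ezero C D A))"
    using push_eadd[OF a z z] ezero_eadd ob assms by metis
  then show ?thesis
    using ab_group_on_idem_zero[OF Ex_group push_Ex[OF a z]] ob assms by metis
qed

lemma pull_ezero:
  assumes c: "c \<in> Hom C D' D" and "A \<in> Ob C"
  shows "pull C c (ezero C D A) = ezero C D' A"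
proof -
  have ob: "D \<in> Ob C" "D' \<in> Ob C" using Hom_Ob c by auto
  have z: "ezero C D A \<in> Ex C D A" using ezero_Ex ob assms by auto
  have "pull C c (ezero C D A) = eadd C (pull C c (ezero C D A)) (pull C c (ezero C D A))"
    using pull_eadd[OF c z z] ezero_eadd ob assms by metis
  then show ?thesis
    using ab_group_on_idem_zero[OF Ex_group pull_Ex[OF c z]] ob assms by metis
qed

lemma realization_exists:
  "d \<in> Ex C D A \<Longrightarrow> \<exists>B x y. x \<in> Hom C A B \<and> y \<in> Hom C B D \<and> rea C d x y"
  using ET2[unfolded ET2_def, THEN conjunct2, THEN conjunct1] by blast

lemma realizations_equiv:
  "d \<in> Ex C D A \<Longrightarrow> x \<in> Hom C A B \<Longrightarrow> y \<in> Hom C B D \<Longrightarrow> rea C d x y \<Longrightarrow>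
   x' \<in> Hom C A B' \<Longrightarrow> y' \<in> Hom C B' D \<Longrightarrow> rea C d x' y' \<Longrightarrow> equiv_seq C B B' x y x' y'"
  using ET2[unfolded ET2_def, THEN conjunct2, THEN conjunct2, THEN conjunct1] by blast

lemma realization_morphism:
  "d \<in> Ex C D A \<Longrightarrow> d' \<in> Ex C D' A' \<Longrightarrow> x \<in> Hom C A B \<Longrightarrow> y \<in> Hom C B D \<Longrightarrow>
   x' \<in> Hom C A' B' \<Longrightarrow> y' \<in> Hom C B' D' \<Longrightarrow> rea C d x y \<Longrightarrow> rea C d' x' y' \<Longrightarrow>
   a \<in> Hom C A A' \<Longrightarrow> c \<in> Hom C D D' \<Longrightarrow> push C a d = pull C c d' \<Longrightarrow>
   \<exists>b\<in>Hom C B B'. cmp C b x = cmp C x' a \<and> cmp C c y = cmp C y' b"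
  using ET2[unfolded ET2_def, THEN conjunct2, THEN conjunct2, THEN conjunct2, THEN conjunct1] by blast

lemma realization_ezero:
  "is_biproduct C A D P p1 p2 i1 i2 \<Longrightarrow> rea C (ezero C D A) i1 p2"
  using ET2[unfolded ET2_def, THEN conjunct2, THEN conjunct2, THEN conjunct2, THEN conjunct2,
      THEN conjunct1] by blast

lemma ET3_fill:
  "d \<in> Ex C D A \<Longrightarrow> d' \<in> Ex C D' A' \<Longrightarrow> x \<in> Hom C A B \<Longrightarrow> y \<in> Hom C B D \<Longrightarrow>
   x' \<in> Hom C A' B' \<Longrightarrow> y' \<in> Hom C B' D' \<Longrightarrow> rea C d x y \<Longrightarrow> rea C d' x' y' \<Longrightarrow>
   a \<in> Hom C A A' \<Longrightarrow> b \<in> Hom C B B' \<Longrightarrow> cmp C b x = cmp C x' a \<Longrightarrow>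
   \<exists>c\<in>Hom C D D'. cmp C c y = cmp C y' b \<and> push C a d = pull C c d'"
  using ET3 unfolding ET3_def by blast

lemma ET3op_fill:
  "d \<in> Ex C D A \<Longrightarrow> d' \<in> Ex C D' A' \<Longrightarrow> x \<in> Hom C A B \<Longrightarrow> y \<in> Hom C B D \<Longrightarrow>
   x' \<in> Hom C A' B' \<Longrightarrow> y' \<in> Hom C B' D' \<Longrightarrow> rea C d x y \<Longrightarrow> rea C d' x' y' \<Longrightarrow>
   b \<in> Hom C B B' \<Longrightarrow> c \<in> Hom C D D' \<Longrightarrow> cmp C c y = cmp C y' b \<Longrightarrow>
   \<exists>a\<in>Hom C A A'. cmp C b x = cmp C x' a \<and> push C a d = pull C c d'"
  using ET3op unfolding ET3op_def by blast

lemma ET4_octahedron: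
  "d \<in> Ex C D A \<Longrightarrow> f \<in> Hom C A B \<Longrightarrow> f' \<in> Hom C B D \<Longrightarrow> rea C d f f' \<Longrightarrow>
   d' \<in> Ex C F B \<Longrightarrow> g \<in> Hom C B G \<Longrightarrow> g' \<in> Hom C G F \<Longrightarrow> rea C d' g g' \<Longrightarrow>
   \<exists>E h' dd e d''. h' \<in> Hom C G E \<and> dd \<in> Hom C D E \<and> e \<in> Hom C E F \<and> d'' \<in> Ex C E A
     \<and> rea C d'' (cmp C g f) h' \<and> cmp C dd f' = cmp C h' g \<and> cmp C e h' = g'
     \<and> rea C (push C f' d') dd e \<and> pull C dd d'' = d \<and> push C f d'' = pull C e d'"
  using ET4 unfolding ET4_def by blast


lemma etri_Ob: "etri C A B D \<Longrightarrow> A \<in> Ob C \<and> B \<in> Ob C \<and> D \<in> Ob C"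
  unfolding etri_def using Hom_Ob by blast

lemma syz_Ob: "syz C i X Z \<Longrightarrow> X \<in> Ob C \<and> Z \<in> Ob C"
  by (induction rule: syz.induct) (auto dest: etri_Ob)

lemma cosyz_Ob: "cosyz C A U \<Longrightarrow> A \<in> Ob C \<Longrightarrow> U \<in> Ob C"
  by (induction rule: cosyz.induct) (auto dest: etri_Ob)

lemma ext_zero_iff: "Z \<in> Ob C \<Longrightarrow> X \<in> Ob C \<Longrightarrow> ext_zero C Z X \<longleftrightarrow> Ex C Z X = {ezero C Z X}"
  unfolding ext_zero_def using ezero_Ex by blast

lemma ext_vanishes_Suc_iff:
  "X \<in> Ob C \<Longrightarrow> ext_vanishes C (Suc j) Y X \<longleftrightarrow> (\<forall>Z. syz C j Y Z \<longrightarrow> ext_zero C Z X)"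
  unfolding ext_vanishes_def using ext_zero_iff syz_Ob by auto

lemma pull_deflation_ezero:
  assumes d: "d \<in> Ex C D A" and x: "x \<in> Hom C A B" and y: "y \<in> Hom C B D" and r: "rea C d x y"
  shows "pull C y d = ezero C B A"
proof -
  have ob: "A \<in> Ob C" "B \<in> Ob C" using Hom_Ob x by auto
  obtain Q p1 p2 i1 i2 where Q: "is_biproduct C A B Q p1 p2 i1 i2"
    using biproduct_exists ob by blast
  note bp = biproduct_Hom[OF Q]
  obtain a where "a \<in> Hom C A A" "push C a (ezero C B A) = pull C y d"
    using ET3op_fill[OF ezero_Ex[OF ob(2,1)] d bp(3,2) x y realization_ezero[OF Q] r bp(2) y refl]
    by blast
  then show ?thesis using push_ezero ob by metis
qed

lemma push_inflation_ezero:
  assumes d: "d \<in> Ex C D A" and x: "x \<in> Hom C A B" and y: "y \<in> Hom C B D" and r: "rea C d x y"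
  shows "push C x d = ezero C D B"
proof -
  have ob: "B \<in> Ob C" "D \<in> Ob C" using Hom_Ob y by auto
  obtain Q p1 p2 i1 i2 where Q: "is_biproduct C B D Q p1 p2 i1 i2"
    using biproduct_exists ob by blast
  note bp = biproduct_Hom[OF Q]
  obtain c where "c \<in> Hom C D D" "push C x d = pull C c (ezero C D B)"
    using ET3_fill[OF d ezero_Ex[OF ob(2,1)] x y bp(3,2) r realization_ezero[OF Q] x bp(3) refl]
    by blast
  then show ?thesis using pull_ezero ob by metis
qed

lemma push_inflation_kernel:
  assumes e: "e \<in> Ex C W A" and d: "d \<in> Ex C D A" and u: "u \<in> Hom C A B" and v: "v \<in> Hom C B D"
    and r: "rea C d u v" and z: "push C u e = ezero C W B"
  obtains f where "f \<in> Hom C W D" and "e = pull C f d"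
proof -
  have ob: "W \<in> Ob C" "A \<in> Ob C" "B \<in> Ob C" using Hom_Ob Ex_Ob e u by auto
  obtain M m q where m: "m \<in> Hom C A M" and q: "q \<in> Hom C M W" and re: "rea C e m q"
    using realization_exists[OF e] by blast
  obtain Q p1 p2 i1 i2 where Q: "is_biproduct C B W Q p1 p2 i1 i2"
    using biproduct_exists ob by blast
  note bp = biproduct_Hom[OF Q]
  have "push C u e = pull C (idm C W) (ezero C W B)"
    using z pull_idm ezero_Ex ob by metis
  then obtain b where b: "b \<in> Hom C M Q" "cmp C b m = cmp C i1 u"
    using realization_morphism[OF e ezero_Ex[OF ob(1,3)] m q bp(3,2) re realization_ezero[OF Q] u
        idm_Hom[OF ob(1)]] by blast
  have p1b: "cmp C p1 b \<in> Hom C M B" using cmp_Hom b bp(1) by blast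
  have "cmp C (cmp C p1 b) m = cmp C p1 (cmp C b m)" using cmp_assoc[OF m b(1) bp(1)] by simp
  also have "\<dots> = cmp C (cmp C p1 i1) u" using b(2) cmp_assoc[OF u bp(3,1)] by simp
  also have "\<dots> = cmp C u (idm C A)" using bp(5) cmp_idm_left[OF u] cmp_idm_right[OF u] by simp
  finally obtain f where "f \<in> Hom C W D" "push C (idm C A) e = pull C f d"
    using ET3_fill[OF e d m q u v re r idm_Hom[OF ob(2)] p1b] by blast
  then show ?thesis using that push_idm[OF e] by metis
qed

lemma pull_deflation_kernel:
  assumes e: "e \<in> Ex C Z D" and \<delta>: "\<delta> \<in> Ex C Z W" and w: "w \<in> Hom C W P" and p: "p \<in> Hom C P Z"
    and r: "rea C \<delta> w p" and z: "pull C p e = ezero C P D"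
  obtains f where "f \<in> Hom C W D" and "e = push C f \<delta>"
proof -
  have ob: "Z \<in> Ob C" "D \<in> Ob C" "P \<in> Ob C" using Hom_Ob Ex_Ob e p by auto
  obtain M m q where m: "m \<in> Hom C D M" and q: "q \<in> Hom C M Z" and re: "rea C e m q"
    using realization_exists[OF e] by blast
  obtain Q p1 p2 i1 i2 where Q: "is_biproduct C D P Q p1 p2 i1 i2"
    using biproduct_exists ob by blast
  note bp = biproduct_Hom[OF Q]
  have "push C (idm C D) (ezero C P D) = pull C p e"
    using z push_idm ezero_Ex ob by metis
  then obtain b where b: "b \<in> Hom C Q M" "cmp C p p2 = cmp C q b"
    using realization_morphism[OF ezero_Ex[OF ob(3,2)] e bp(3,2) m q realization_ezero[OF Q] re
        idm_Hom[OF ob(2)] p] by blast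
  have bi2: "cmp C b i2 \<in> Hom C P M" using cmp_Hom b bp(4) by blast
  have "cmp C q (cmp C b i2) = cmp C (cmp C q b) i2" using cmp_assoc[OF bp(4) b(1) q] by simp
  also have "\<dots> = cmp C p (cmp C p2 i2)" using b(2) cmp_assoc[OF bp(4,2) p] by simp
  also have "\<dots> = cmp C (idm C Z) p" using bp(6) cmp_idm_left[OF p] cmp_idm_right[OF p] by simp
  finally obtain f where "f \<in> Hom C W D" "push C f \<delta> = pull C (idm C Z) e"
    using ET3op_fill[OF \<delta> e w p m q r re bi2 idm_Hom[OF ob(1)]] by metis
  then show ?thesis using that pull_idm[OF e] by metis
qed

lemma factor_through_inflation:
  assumes \<delta>: "\<delta> \<in> Ex C Z W" and w: "w \<in> Hom C W P" and p: "p \<in> Hom C P Z"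
    and r: "rea C \<delta> w p" and f: "f \<in> Hom C W D" and z: "push C f \<delta> = ezero C Z D"
  obtains g where "g \<in> Hom C P D" and "f = cmp C g w"
proof -
  have ob: "Z \<in> Ob C" "D \<in> Ob C" using Hom_Ob p f by auto
  obtain Q p1 p2 i1 i2 where Q: "is_biproduct C D Z Q p1 p2 i1 i2"
    using biproduct_exists ob by blast
  note bp = biproduct_Hom[OF Q]
  have "push C f \<delta> = pull C (idm C Z) (ezero C Z D)"
    using z pull_idm ezero_Ex ob by metis
  then obtain b where b: "b \<in> Hom C P Q" "cmp C b w = cmp C i1 f"
    using realization_morphism[OF \<delta> ezero_Ex[OF ob] w p bp(3,2) r realization_ezero[OF Q] f
        idm_Hom[OF ob(1)]] by blast
  have "cmp C (cmp C p1 b) w = cmp C p1 (cmp C b w)" using cmp_assoc[OF w b(1) bp(1)] by simp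
  also have "\<dots> = cmp C (cmp C p1 i1) f" using b(2) cmp_assoc[OF f bp(3,1)] by simp
  also have "\<dots> = f" using bp(5) cmp_idm_left[OF f] by simp
  finally show ?thesis using that cmp_Hom[OF b(1) bp(1)] by metis
qed

lemma factor_through_deflation:
  assumes d: "d \<in> Ex C D A" and u: "u \<in> Hom C A B" and v: "v \<in> Hom C B D"
    and r: "rea C d u v" and f: "f \<in> Hom C W D" and z: "pull C f d = ezero C W A"
  obtains g where "g \<in> Hom C W B" and "f = cmp C v g"
proof -
  have ob: "W \<in> Ob C" "A \<in> Ob C" using Hom_Ob u f by auto
  obtain Q p1 p2 i1 i2 where Q: "is_biproduct C A W Q p1 p2 i1 i2"
    using biproduct_exists ob by blast
  note bp = biproduct_Hom[OF Q]
  have "push C (idm C A) (ezero C W A) = pull C f d"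
    using z push_idm ezero_Ex ob by metis
  then obtain b where b: "b \<in> Hom C Q B" "cmp C f p2 = cmp C v b"
    using realization_morphism[OF ezero_Ex[OF ob] d bp(3,2) u v realization_ezero[OF Q] r
        idm_Hom[OF ob(2)] f] by blast
  have "cmp C v (cmp C b i2) = cmp C (cmp C v b) i2" using cmp_assoc[OF bp(4) b(1) v] by simp
  also have "\<dots> = cmp C f (cmp C p2 i2)" using b(2) cmp_assoc[OF bp(4,2) f] by simp
  also have "\<dots> = f" using bp(6) cmp_idm_right[OF f] by simp
  finally show ?thesis using that cmp_Hom[OF bp(4) b(1)] by metis
qed

lemma ext_zero_projective: "projective C P \<Longrightarrow> ext_zero C P D"
  unfolding ext_zero_def
proof
  fix e assume P: "projective C P" and e: "e \<in> Ex C P D"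
  have ob: "P \<in> Ob C" "D \<in> Ob C" using Ex_Ob e by auto
  obtain M m q where m: "m \<in> Hom C D M" and q: "q \<in> Hom C M P" and re: "rea C e m q"
    using realization_exists[OF e] by blast
  obtain s where s: "s \<in> Hom C P M" "cmp C q s = idm C P"
    using P[unfolded projective_def] e m q re idm_Hom[OF ob(1)] by blast
  have "e = pull C (cmp C q s) e" using s pull_idm[OF e] by simp
  also have "\<dots> = pull C s (pull C q e)" using pull_cmp[OF q s(1) e] .
  also have "\<dots> = ezero C P D" using pull_deflation_ezero[OF e m q re] pull_ezero[OF s(1) ob(2)] by simp
  finally show "e = ezero C P D" .
qed

lemma ext_zero_injective: "injective C I \<Longrightarrow> ext_zero C W I"
  unfolding ext_zero_def
proof
  fix e assume I: "injective C I" and e: "e \<in> Ex C W I"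
  have ob: "W \<in> Ob C" "I \<in> Ob C" using Ex_Ob e by auto
  obtain M m q where m: "m \<in> Hom C I M" and q: "q \<in> Hom C M W" and re: "rea C e m q"
    using realization_exists[OF e] by blast
  obtain r where r: "r \<in> Hom C M I" "cmp C r m = idm C I"
    using I[unfolded injective_def] e m q re idm_Hom[OF ob(2)] by blast
  have "e = push C (cmp C r m) e" using r push_idm[OF e] by simp
  also have "\<dots> = push C r (push C m e)" using push_cmp[OF m r(1) e] .
  also have "\<dots> = ezero C W I" using push_inflation_ezero[OF e m q re] push_ezero[OF r(1) ob(1)] by simp
  finally show "e = ezero C W I" .
qed


lemma ext_zero_first_terms:
  assumes WPZ: "etri C W P Z" and ABD: "etri C A B D"
    and WB: "ext_zero C W B" and ZD: "ext_zero C Z D" and PA: "ext_zero C P A"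
  shows "ext_zero C W A"
  unfolding ext_zero_def
proof
  fix e assume e: "e \<in> Ex C W A"
  obtain w p \<delta> where \<delta>: "\<delta> \<in> Ex C Z W" and w: "w \<in> Hom C W P" and p: "p \<in> Hom C P Z"
    and r\<delta>: "rea C \<delta> w p" using WPZ unfolding etri_def by blast
  obtain u v \<eta> where \<eta>: "\<eta> \<in> Ex C D A" and u: "u \<in> Hom C A B" and v: "v \<in> Hom C B D"
    and r\<eta>: "rea C \<eta> u v" using ABD unfolding etri_def by blast
  have "push C u e = ezero C W B" using WB push_Ex[OF u e] unfolding ext_zero_def by blast
  then obtain f where f: "f \<in> Hom C W D" "e = pull C f \<eta>"
    using push_inflation_kernel[OF e \<eta> u v r\<eta>] by blast
  have "push C f \<delta> = ezero C Z D" using ZD push_Ex[OF f(1) \<delta>] unfolding ext_zero_def by blast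
  then obtain g where g: "g \<in> Hom C P D" "f = cmp C g w"
    using factor_through_inflation[OF \<delta> w p r\<delta> f(1)] by blast
  have g\<eta>: "pull C g \<eta> = ezero C P A" using PA pull_Ex[OF g(1) \<eta>] unfolding ext_zero_def by blast
  have "e = pull C w (pull C g \<eta>)" using f(2) g(2) pull_cmp[OF g(1) w \<eta>] by simp
  then show "e = ezero C W A" using g\<eta> pull_ezero[OF w] Ex_Ob[OF e] by simp
qed

lemma ext_zero_last_terms:
  assumes WPZ: "etri C W P Z" and ABD: "etri C A B D"
    and PD: "ext_zero C P D" and WA: "ext_zero C W A" and ZB: "ext_zero C Z B"
  shows "ext_zero C Z D"
  unfolding ext_zero_def
proof
  fix e assume e: "e \<in> Ex C Z D"
  obtain w p \<delta> where \<delta>: "\<delta> \<in> Ex C Z W" and w: "w \<in> Hom C W P" and p: "p \<in> Hom C P Z"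
    and r\<delta>: "rea C \<delta> w p" using WPZ unfolding etri_def by blast
  obtain u v \<eta> where \<eta>: "\<eta> \<in> Ex C D A" and u: "u \<in> Hom C A B" and v: "v \<in> Hom C B D"
    and r\<eta>: "rea C \<eta> u v" using ABD unfolding etri_def by blast
  have "pull C p e = ezero C P D" using PD pull_Ex[OF p e] unfolding ext_zero_def by blast
  then obtain f where f: "f \<in> Hom C W D" "e = push C f \<delta>"
    using pull_deflation_kernel[OF e \<delta> w p r\<delta>] by blast
  have "pull C f \<eta> = ezero C W A" using WA pull_Ex[OF f(1) \<eta>] unfolding ext_zero_def by blast
  then obtain g where g: "g \<in> Hom C W B" "f = cmp C v g"
    using factor_through_deflation[OF \<eta> u v r\<eta> f(1)] by blast
  have g\<delta>: "push C g \<delta> = ezero C Z B" using ZB push_Ex[OF g(1) \<delta>] unfolding ext_zero_def by blast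
  have "e = push C v (push C g \<delta>)" using f(2) g(2) push_cmp[OF g(1) v \<delta>] by simp
  then show "e = ezero C Z D" using g\<delta> push_ezero[OF v] Ex_Ob[OF e] by simp
qed

(* Exactness of E(S,U) \<rightarrow> E(Y,U) \<rightarrow> E\<^sup>2(L,U) at E(Y,U), with E(W,U) standing in for E\<^sup>2(L,U):
   since E(W,U) = 0, the extension d of Y \<rightarrow> S \<rightarrow> L is v\<^sub>* d' for the deflation v : M \<rightarrow> Y
   realizing e, and (ET4) then exhibits e as pulled back along the inflation Y \<rightarrow> S. *)
lemma ext_zero_cocone:
  assumes YSL: "etri C Y S L" and SU: "ext_zero C S U"
    and P: "projective C P" and WPL: "etri C W P L" and WU: "ext_zero C W U"
  shows "ext_zero C Y U"
  unfolding ext_zero_def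
proof
  fix e assume e: "e \<in> Ex C Y U"
  obtain x y d where d: "d \<in> Ex C L Y" and x: "x \<in> Hom C Y S" and y: "y \<in> Hom C S L"
    and rd: "rea C d x y" using YSL unfolding etri_def by blast
  obtain w p \<delta> where \<delta>: "\<delta> \<in> Ex C L W" and w: "w \<in> Hom C W P" and p: "p \<in> Hom C P L"
    and r\<delta>: "rea C \<delta> w p" using WPL unfolding etri_def by blast
  have L: "L \<in> Ob C" using Hom_Ob p by blast
  obtain M u v where u: "u \<in> Hom C U M" and v: "v \<in> Hom C M Y" and re: "rea C e u v"
    using realization_exists[OF e] by blast
  obtain g where g: "g \<in> Hom C P S" "cmp C y g = p"
    using P[unfolded projective_def] d x y rd p by blast
  have "cmp C (idm C L) p = cmp C y g" using g cmp_idm_left[OF p] by simp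
  then obtain a where a: "a \<in> Hom C W Y" "push C a \<delta> = pull C (idm C L) d"
    using ET3op_fill[OF \<delta> d w p x y r\<delta> rd g(1) idm_Hom[OF L]] by blast
  have "pull C a e = ezero C W U" using WU pull_Ex[OF a(1) e] unfolding ext_zero_def by blast
  then obtain a' where a': "a' \<in> Hom C W M" "a = cmp C v a'"
    using factor_through_deflation[OF e u v re a(1)] by blast
  define d' where "d' = push C a' \<delta>"
  have d': "d' \<in> Ex C L M" using push_Ex[OF a'(1) \<delta>] d'_def by simp
  have vd': "push C v d' = d" using d'_def push_cmp[OF a'(1) v \<delta>] a a' pull_idm[OF d] by simp
  obtain G g2 g2' where g2: "g2 \<in> Hom C M G" and g2': "g2' \<in> Hom C G L"
    and rd': "rea C d' g2 g2'" using realization_exists[OF d'] by blast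
  obtain E dd e' d'' where dd: "dd \<in> Hom C Y E" and e': "e' \<in> Hom C E L" and d'': "d'' \<in> Ex C E U"
    and rdd: "rea C (push C v d') dd e'" and pd: "pull C dd d'' = e"
    using ET4_octahedron[OF e u v re d' g2 g2' rd'] by blast
  have "equiv_seq C S E x y dd e'" using realizations_equiv[OF d x y rd dd e'] rdd vd' by simp
  then obtain b where b: "is_iso C S E b" "cmp C b x = dd" unfolding equiv_seq_def by blast
  have bh: "b \<in> Hom C S E" using b(1) unfolding is_iso_def by blast
  have bd: "pull C b d'' = ezero C S U" using SU pull_Ex[OF bh d''] unfolding ext_zero_def by blast
  have "e = pull C x (pull C b d'')" using pd b(2) pull_cmp[OF bh x d''] by simp
  then show "e = ezero C Y U" using bd pull_ezero[OF x] Ex_Ob[OF e] by simp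
qed

lemma etri_split:
  assumes "etri C A B D" and "ext_zero C D A"
  obtains Q p1 p2 i1 i2 b where "is_biproduct C A D Q p1 p2 i1 i2" and "is_iso C B Q b"
proof -
  obtain x y d where d: "d \<in> Ex C D A" and x: "x \<in> Hom C A B" and y: "y \<in> Hom C B D"
    and r: "rea C d x y" using assms(1) unfolding etri_def by blast
  obtain Q p1 p2 i1 i2 where Q: "is_biproduct C A D Q p1 p2 i1 i2"
    using biproduct_exists Hom_Ob x y by blast
  have "rea C d i1 p2" using realization_ezero[OF Q] assms(2) d unfolding ext_zero_def by simp
  then have "equiv_seq C B Q x y i1 p2"
    using realizations_equiv[OF d x y r] biproduct_Hom[OF Q] by blast
  then show ?thesis using that Q unfolding equiv_seq_def by blast
qed

lemma summand_of_split_etri: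
  assumes "subcategory C T" and "closed_under_summands C T"
    and "etri C A B D" and "B \<in> T" and "ext_zero C D A"
  shows "A \<in> T"
proof -
  obtain Q p1 p2 i1 i2 b where "is_biproduct C A D Q p1 p2 i1 i2" "is_iso C B Q b"
    using etri_split assms(3,5) .
  then show ?thesis using assms(1,2,4) unfolding subcategory_def closed_under_summands_def by blast
qed

lemma ext_vanishes_etri_first:
  assumes XBX': "etri C X B X'"
    and YB: "ext_vanishes C (Suc (Suc j)) Y B" and YX': "ext_vanishes C (Suc j) Y X'"
  shows "ext_vanishes C (Suc (Suc j)) Y X"
proof -
  have "ext_zero C Z X" if Z: "syz C (Suc j) Y Z" for Z
  proof -
    from Z obtain Z' P where Z': "syz C j Y Z'" and P: "projective C P" and ZPZ': "etri C Z P Z'"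
      by (auto elim: syz.cases)
    show ?thesis
      using ext_zero_first_terms[OF ZPZ' XBX' ext_vanishes_SucD[OF YB Z]
          ext_vanishes_SucD[OF YX' Z'] ext_zero_projective[OF P]] .
  qed
  then show ?thesis using ext_vanishes_Suc_iff etri_Ob[OF XBX'] by blast
qed

lemma ext_vanishes_etri_last:
  assumes EP: "enough_projectives C" and XBX': "etri C X B X'"
    and YB: "ext_vanishes C (Suc j) Y B" and YX: "ext_vanishes C (Suc (Suc j)) Y X"
  shows "ext_vanishes C (Suc j) Y X'"
proof -
  have "ext_zero C Z X'" if Z: "syz C j Y Z" for Z
  proof -
    obtain W P where P: "projective C P" and WPZ: "etri C W P Z"
      using EP syz_Ob[OF Z] unfolding enough_projectives_def by blast
    show ?thesis
      using ext_zero_last_terms[OF WPZ XBX' ext_zero_projective[OF P]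
          ext_vanishes_SucD[OF YX syz.syzS[OF Z P WPZ]] ext_vanishes_SucD[OF YB Z]] .
  qed
  then show ?thesis using ext_vanishes_Suc_iff etri_Ob[OF XBX'] by blast
qed

lemma Tcheck_Suc:
  "X \<in> Tcheck C T (Suc n) \<longleftrightarrow> (\<exists>B X'. etri C X B X' \<and> B \<in> T \<and> X' \<in> Tcheck C T n)"
proof
  assume "X \<in> Tcheck C T (Suc n)"
  then obtain K Ti where K0: "K 0 = X"
    and KT: "\<forall>i<Suc n. etri C (K i) (Ti i) (K (Suc i)) \<and> Ti i \<in> T" and "K (Suc n) \<in> T"
    unfolding Tcheck_def by blast
  moreover have "K 1 \<in> Ob C" using KT etri_Ob by auto
  ultimately have "K 1 \<in> Tcheck C T n" unfolding Tcheck_def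
    by (intro CollectI conjI exI[of _ "K \<circ> Suc"] exI[of _ "Ti \<circ> Suc"]) auto
  then show "\<exists>B X'. etri C X B X' \<and> B \<in> T \<and> X' \<in> Tcheck C T n" using K0 KT by auto
next
  assume "\<exists>B X'. etri C X B X' \<and> B \<in> T \<and> X' \<in> Tcheck C T n"
  then obtain B X' K Ti where XBX': "etri C X B X'" "B \<in> T" and "K 0 = X'"
    and "\<forall>i<n. etri C (K i) (Ti i) (K (Suc i)) \<and> Ti i \<in> T" and "K n \<in> T"
    unfolding Tcheck_def by blast
  then show "X \<in> Tcheck C T (Suc n)" using etri_Ob[OF XBX'(1)] unfolding Tcheck_def
    by (intro CollectI conjI exI[of _ "case_nat X K"] exI[of _ "case_nat B Ti"])
      (auto simp: less_Suc_eq_0_disj)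
qed

lemma XT_etri:
  assumes "X \<in> XT C T"
  obtains B X' where "etri C X B X'" and "B \<in> T" and "X' \<in> XT C T" and "X' \<in> lperp C T"
proof -
  obtain K Ti where K0: "K 0 = X"
    and KT: "\<forall>i. etri C (K i) (Ti i) (K (Suc i)) \<and> Ti i \<in> T \<and> K (Suc i) \<in> lperp C T"
    using assms unfolding XT_def by blast
  define K' Ti' where "K' = K \<circ> Suc" and "Ti' = Ti \<circ> Suc"
  have "K' 0 = K 1" and "\<forall>i. etri C (K' i) (Ti' i) (K' (Suc i)) \<and> Ti' i \<in> T \<and> K' (Suc i) \<in> lperp C T"
    using KT by (simp_all add: K'_def Ti'_def)
  moreover have "K 1 \<in> Ob C" using KT lperp_iff by (metis One_nat_def)
  ultimately have "K 1 \<in> XT C T" unfolding XT_def by blast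
  then show ?thesis using that K0 KT by auto
qed

lemma ext_vanishes_of_Tcheck:
  assumes Y: "Y \<in> lperp C T" and "X \<in> Tcheck C T n"
  shows "ext_vanishes C (Suc n) Y X"
  using assms(2)
proof (induction n arbitrary: X)
  case 0
  then have "X \<in> T" unfolding Tcheck_0 by blast
  then show ?case by (rule lperp_ext_vanishes[OF Y])
next
  case (Suc n)
  from Suc.prems obtain B X' where XBX': "etri C X B X'" and B: "B \<in> T" and X': "X' \<in> Tcheck C T n"
    unfolding Tcheck_Suc by blast
  show ?case by (rule ext_vanishes_etri_first[OF XBX' lperp_ext_vanishes[OF Y B] Suc.IH[OF X']])
qed

lemma Tcheck_of_ext_vanishes:
  assumes EP: "enough_projectives C" and ST: "subcategory C T" and CS: "closed_under_summands C T"
    and XT_lperp: "XT C T \<subseteq> lperp C T"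
    and "X \<in> XT C T" and "\<forall>Y\<in>XT C T. ext_vanishes C (Suc n) Y X"
  shows "X \<in> Tcheck C T n"
  using assms(5,6)
proof (induction n arbitrary: X)
  case 0
  obtain B X' where XBX': "etri C X B X'" and B: "B \<in> T" and X': "X' \<in> XT C T"
    and "X' \<in> lperp C T" by (rule XT_etri[OF 0(1)])
  have "ext_vanishes C (Suc 0) X' X" using "0.prems"(2) X' ..
  moreover have "syz C 0 X' X'" using etri_Ob[OF XBX'] by (simp add: syz.syz0)
  ultimately have "ext_zero C X' X" by (rule ext_vanishes_SucD)
  then have "X \<in> T" by (rule summand_of_split_etri[OF ST CS XBX' B])
  then show ?case unfolding Tcheck_0 using etri_Ob[OF XBX'] by blast
next
  case (Suc n)
  obtain B X' where XBX': "etri C X B X'" and B: "B \<in> T" and X': "X' \<in> XT C T"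
    and "X' \<in> lperp C T" by (rule XT_etri[OF Suc.prems(1)])
  have "ext_vanishes C (Suc n) Y X'" if Y: "Y \<in> XT C T" for Y
  proof (rule ext_vanishes_etri_last[OF EP XBX'])
    show "ext_vanishes C (Suc n) Y B" using Y XT_lperp by (blast intro: lperp_ext_vanishes[OF _ B])
    show "ext_vanishes C (Suc (Suc n)) Y X" using Suc.prems(2) Y by blast
  qed
  then have "X' \<in> Tcheck C T n" using Suc.IH[OF X'] by blast
  then show ?case unfolding Tcheck_Suc using XBX' B by blast
qed

lemma lperp_ext_zero_syz_cosyz:
  assumes EP: "enough_projectives C" and Y: "Y \<in> lperp C T" and B: "B \<in> T"
    and "cosyz C B U" and "syz C j Y Z"
  shows "ext_zero C Z U"
  using assms(4,5)
proof (induction arbitrary: j Z rule: cosyz.induct)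
  case cosyz_refl
  then show ?case by (rule ext_vanishes_SucD[OF lperp_ext_vanishes[OF Y B]])
next
  case (cosyz_step U I U')
  obtain W P where P: "projective C P" and WPZ: "etri C W P Z"
    using EP syz_Ob[OF cosyz_step.prems] unfolding enough_projectives_def by blast
  have "ext_zero C W U" by (rule cosyz_step.IH[OF syz.syzS[OF cosyz_step.prems P WPZ]])
  then show ?case
    by (rule ext_zero_last_terms[OF WPZ cosyz_step.hyps(3) ext_zero_projective[OF P] _
          ext_zero_injective[OF cosyz_step.hyps(2)]])
qed

lemma ext_zero_cosyz_of_etri:
  assumes EP: "enough_projectives C" and YSL: "etri C Y S L"
    and S: "S \<in> lperp C T" and L: "L \<in> lperp C T" and B: "B \<in> T" and U: "cosyz C B U"
  shows "ext_zero C Y U"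
proof -
  obtain W P where P: "projective C P" and WPL: "etri C W P L"
    using EP etri_Ob[OF YSL] unfolding enough_projectives_def by blast
  have "syz C 0 S S" "syz C (Suc 0) L W"
    using etri_Ob[OF YSL] syz.syzS[OF syz.syz0 P WPL] by (simp_all add: syz.syz0)
  then show ?thesis
    using ext_zero_cocone[OF YSL lperp_ext_zero_syz_cosyz[OF EP S B U] P WPL
        lperp_ext_zero_syz_cosyz[OF EP L B U]] by blast
qed

lemma ext_zero_syz_cosyz_of_ext_zero_cosyz:
  assumes EI: "enough_injectives C" and B: "B \<in> Ob C"
    and "syz C j Y Z" and "\<forall>U. cosyz C B U \<longrightarrow> ext_zero C Y U" and "cosyz C B U"
  shows "ext_zero C Z U"
  using assms(3-5)
proof (induction arbitrary: U rule: syz.induct)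
  case (syz0 X)
  then show ?case by blast
next
  case (syzS i X Z P W)
  obtain I U' where I: "injective C I" and UIU': "etri C U I U'"
    using EI cosyz_Ob[OF syzS.prems(2) B] unfolding enough_injectives_def by blast
  have "ext_zero C Z U'"
    by (rule syzS.IH[OF syzS.prems(1) cosyz.cosyz_step[OF syzS.prems(2) I UIU']])
  then show ?case
    by (rule ext_zero_first_terms[OF syzS.hyps(3) UIU' ext_zero_injective[OF I] _
          ext_zero_projective[OF syzS.hyps(2)]])
qed

lemma lperp_of_etri:
  assumes EP: "enough_projectives C" and EI: "enough_injectives C" and T: "T \<subseteq> Ob C"
    and YSL: "etri C Y S L" and S: "S \<in> lperp C T" and L: "L \<in> lperp C T"
  shows "Y \<in> lperp C T"
proof -
  have "ext_vanishes C (Suc j) Y B" if B: "B \<in> T" for j B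
  proof -
    have B_Ob: "B \<in> Ob C" using B T by blast
    have "\<forall>U. cosyz C B U \<longrightarrow> ext_zero C Y U" using ext_zero_cosyz_of_etri[OF EP YSL S L B] by blast
    then have "ext_zero C Z B" if "syz C j Y Z" for Z
      by (rule ext_zero_syz_cosyz_of_ext_zero_cosyz[OF EI B_Ob that _ cosyz.cosyz_refl])
    then show ?thesis unfolding ext_vanishes_Suc_iff[OF B_Ob] by blast
  qed
  then show ?thesis unfolding lperp_iff using etri_Ob[OF YSL] by blast
qed

lemma XT_subset_lperp:
  assumes "enough_projectives C" and "enough_injectives C"
    and "subcategory C T" and "self_orthogonal C T"
  shows "XT C T \<subseteq> lperp C T"
proof
  fix X assume "X \<in> XT C T"
  then obtain B X' where XBX': "etri C X B X'" and B: "B \<in> T" and "X' \<in> XT C T"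
    and X': "X' \<in> lperp C T" by (rule XT_etri)
  have T: "T \<subseteq> Ob C" using assms(3) unfolding subcategory_def by blast
  have "B \<in> lperp C T" using B T assms(4) unfolding self_orthogonal_def lperp_def by blast
  then show "X \<in> lperp C T" by (rule lperp_of_etri[OF assms(1,2) T XBX' _ X'])
qed

end

theorem lemma3p5:
  fixes C :: "('o,'m,'e) extri_cat" and T :: "'o set" and n :: nat and X :: 'o
  assumes "extriangulated C" and "krull_schmidt C"
    and "enough_projectives C" and "enough_injectives C"
    and "subcategory C T" and "self_orthogonal C T" and "closed_under_summands C T"
    and "X \<in> XT C T"
  shows "(X \<in> Tcheck C T n \<longleftrightarrow> (\<forall>Y\<in>lperp C T. ext_vanishes C (Suc n) Y X))
       \<and> ((\<forall>Y\<in>lperp C T. ext_vanishes C (Suc n) Y X) \<longleftrightarrow> (\<forall>Y\<in>XT C T. ext_vanishes C (Suc n) Y X))"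
proof -
  interpret extri_category C by unfold_locales fact
  have XT_lperp: "XT C T \<subseteq> lperp C T" by (rule XT_subset_lperp[OF assms(3-6)])
  have "X \<in> Tcheck C T n \<Longrightarrow> \<forall>Y\<in>lperp C T. ext_vanishes C (Suc n) Y X"
    by (blast intro: ext_vanishes_of_Tcheck)
  moreover have "\<forall>Y\<in>lperp C T. ext_vanishes C (Suc n) Y X \<Longrightarrow>
      \<forall>Y\<in>XT C T. ext_vanishes C (Suc n) Y X"
    using XT_lperp by blast
  moreover have "\<forall>Y\<in>XT C T. ext_vanishes C (Suc n) Y X \<Longrightarrow> X \<in> Tcheck C T n"
    by (rule Tcheck_of_ext_vanishes[OF assms(3,5,7) XT_lperp assms(8)])
  ultimately show ?thesis by blast
qed

end
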